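(* Let $n\ge 10$ be even, $K_n=(V,E)$ the complete graph, and $M_1,M_2$ two different perfect matchings in $K_n$. Then $\bm{c}=\chi(M_1)-\chi(M_2)$ is a circuit of the Perfect Matching polytope $P_{\mathrm{perfmatch}}(n)=\operatorname{conv}\{\chi(M): M\text{ a perfect matching in }K_n\}$, with circuits taken with respect to the linear description $$\bm{x}(\delta(S))\ge 1\ \text{for all } S\subset V,\ |S|\text{ odd},\ |S|\ge 3;\quad \bm{x}(\delta(v))=1\ \text{for all } v\in V;\quad \bm{x}\ge\bm{0}.$$
   Context: $\chi(M)\in\{0,1\}^E$ is the characteristic vector of $M$; $\delta(S)$ is the set of edges with exactly one endpoint in $S$, $\delta(v)=\delta(\{v\})$, $\bm{x}(F)=\sum_{e\in F}x_e$. Circuits: for a polytope $P=\{\bm{x}: A\bm{x}=\bm{b},\ B\bm{x}\le \bm{d}\}$ given by a fixed linear system, a nonzero vector $\bm{g}$ is a circuit of $P$ if $A\bm{g}=\bm{0}$ and $\operatorname{supp}(B\bm{g})$ is inclusion-minimal among the sets $\operatorname{supp}(B\bm{y})$ with $A\bm{y}=\bm{0}$, $\bm{y}\neq\bm{0}$. *)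

theory Defs
  imports Complex_Main
begin

text \<open>Complete graph K_n on vertex set V = {0..<n}; edges are 2-element subsets of V.
  Vectors in R^E are functions from vertex sets to reals vanishing outside E.\<close>

definition verts :: "nat \<Rightarrow> nat set" where
  "verts n = {0..<n}"

definition edges :: "nat \<Rightarrow> nat set set" where
  "edges n = {e. e \<subseteq> verts n \<and> card e = 2}"

definition delta :: "nat \<Rightarrow> nat set \<Rightarrow> nat set set" where
  "delta n S = {e \<in> edges n. card (e \<inter> S) = 1}"

definition xsum :: "(nat set \<Rightarrow> real) \<Rightarrow> nat set set \<Rightarrow> real" where
  "xsum x F = (\<Sum>e\<in>F. x e)"

definition perfect_matching :: "nat \<Rightarrow> nat set set \<Rightarrow> bool" where
  "perfect_matching n M \<longleftrightarrow> M \<subseteq> edges n \<and> (\<forall>v\<in>verts n. card {e\<in>M. v \<in> e} = 1)"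

definition chi :: "nat set set \<Rightarrow> nat set \<Rightarrow> real" where
  "chi M = (\<lambda>e. if e \<in> M then 1 else 0)"

definition is_vec :: "nat \<Rightarrow> (nat set \<Rightarrow> real) \<Rightarrow> bool" where
  "is_vec n y \<longleftrightarrow> (\<forall>e. e \<notin> edges n \<longrightarrow> y e = 0)"

text \<open>Inequality rows B: Inl S for the odd-set constraints x(delta(S)) >= 1
  (S a proper subset of V, |S| odd, |S| >= 3), Inr e for nonnegativity x_e >= 0.\<close>
definition ineq_rows :: "nat \<Rightarrow> (nat set + nat set) set" where
  "ineq_rows n = Inl ` {S. S \<subset> verts n \<and> odd (card S) \<and> card S \<ge> 3} \<union> Inr ` edges n"

text \<open>Value of row r of B applied to y (up to sign, which does not affect support).\<close>
fun row_val :: "nat \<Rightarrow> (nat set \<Rightarrow> real) \<Rightarrow> nat set + nat set \<Rightarrow> real" where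
  "row_val n y (Inl S) = xsum y (delta n S)"
| "row_val n y (Inr e) = y e"

definition supp_B :: "nat \<Rightarrow> (nat set \<Rightarrow> real) \<Rightarrow> (nat set + nat set) set" where
  "supp_B n y = {r \<in> ineq_rows n. row_val n y r \<noteq> 0}"

definition in_ker :: "nat \<Rightarrow> (nat set \<Rightarrow> real) \<Rightarrow> bool" where
  "in_ker n y \<longleftrightarrow> is_vec n y \<and> (\<forall>v\<in>verts n. xsum y (delta n {v}) = 0)"

definition is_circuit :: "nat \<Rightarrow> (nat set \<Rightarrow> real) \<Rightarrow> bool" where
  "is_circuit n g \<longleftrightarrow> in_ker n g \<and> g \<noteq> (\<lambda>_. 0) \<and>
     \<not> (\<exists>y. in_ker n y \<and> y \<noteq> (\<lambda>_. 0) \<and> supp_B n y \<subset> supp_B n g)"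

end

theory Submission
  imports Defs
begin

text \<open>Let \<open>c = \<chi>(M1) - \<chi>(M2)\<close> and let \<open>y \<noteq> 0\<close> satisfy the degree equations with
  \<open>supp(By) \<subset> supp(Bc)\<close>. The nonnegativity rows force \<open>y\<close> to live on \<open>M1 \<triangle> M2\<close>. If
  \<open>y(e) + y(f) = 0\<close> for all \<open>e \<in> M1 - M2\<close>, \<open>f \<in> M2 - M1\<close>, then \<open>y\<close> is a multiple of \<open>c\<close> and
  has the same support. Otherwise pick such \<open>e, f\<close> with \<open>y(e) + y(f) \<noteq> 0\<close>; the degree
  equation at a common vertex shows \<open>e \<inter> f = {}\<close>. Adding a vertex \<open>w\<close> not matched to
  \<open>e \<union> f\<close> by \<open>M2\<close> resp. \<open>M1\<close> (possible as \<open>n \<ge> 10\<close>) gives a 5-set \<open>S\<close> spanning no edge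
  of \<open>M1 \<union> M2\<close> besides \<open>e, f\<close>. Summing the degree equations over \<open>S\<close>,
  \<open>x(\<delta>(S)) = -2 x(E[S])\<close> for \<open>x \<in> {y, c}\<close>, so the row of \<open>S\<close> is in the support of
  \<open>By\<close> but not of \<open>Bc\<close>.\<close>

lemma finite_edges: "finite (edges n)"
proof -
  have "edges n \<subseteq> Pow (verts n)" by (auto simp: edges_def)
  then show ?thesis by (rule finite_subset) (simp add: verts_def)
qed

lemma delta_singleton: "delta n {v} = {g \<in> edges n. v \<in> g}"
  by (auto simp: delta_def Int_insert_right split: if_splits)

lemma sum_xsum_delta_singletons:
  assumes "finite S"
  shows "(\<Sum>v\<in>S. xsum z (delta n {v})) = xsum z (delta n S) + 2 * sum z {g \<in> edges n. g \<subseteq> S}"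
proof -
  have fin: "finite (edges n)" by (rule finite_edges)
  have "(\<Sum>v\<in>S. xsum z (delta n {v})) = (\<Sum>v\<in>S. \<Sum>g\<in>edges n. if v \<in> g then z g else 0)"
    using fin by (simp add: xsum_def delta_singleton sum.inter_filter)
  also have "\<dots> = (\<Sum>g\<in>edges n. \<Sum>v\<in>S. if v \<in> g then z g else 0)"
    by (rule sum.swap)
  also have "\<dots> = (\<Sum>g\<in>edges n. z g * card (g \<inter> S))"
  proof (rule sum.cong[OF refl])
    fix g
    have "(\<Sum>v\<in>S. if v \<in> g then z g else 0) = sum (\<lambda>_. z g) {v \<in> S. v \<in> g}"
      using assms by (rule sum.inter_filter[symmetric])
    also have "{v \<in> S. v \<in> g} = g \<inter> S" by auto
    finally show "(\<Sum>v\<in>S. if v \<in> g then z g else 0) = z g * card (g \<inter> S)" by simp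
  qed
  also have "\<dots> = (\<Sum>g\<in>edges n. (if card (g \<inter> S) = 1 then z g else 0) + 2 * (if g \<subseteq> S then z g else 0))"
  proof (rule sum.cong[OF refl])
    fix g assume "g \<in> edges n"
    then have cg: "card g = 2" and fg: "finite g"
      by (auto simp: edges_def intro: card_ge_0_finite)
    show "z g * card (g \<inter> S) = (if card (g \<inter> S) = 1 then z g else 0) + 2 * (if g \<subseteq> S then z g else 0)"
    proof (cases "g \<subseteq> S")
      case True
      then show ?thesis using cg by (simp add: Int_absorb2)
    next
      case False
      then have "card (g \<inter> S) < 2" using psubset_card_mono[OF fg, of "g \<inter> S"] cg by auto
      then show ?thesis using False by (auto simp: less_2_cases_iff)
    qed
  qed
  also have "\<dots> = xsum z (delta n S) + 2 * sum z {g \<in> edges n. g \<subseteq> S}"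
    using fin by (simp add: sum.distrib xsum_def delta_def sum.inter_filter sum_distrib_left[symmetric])
  finally show ?thesis .
qed

lemma perfect_matching_edge:
  assumes "perfect_matching n M" "g \<in> M"
  shows "g \<in> edges n" "card g = 2" "g \<subseteq> verts n"
  using assms by (auto simp: perfect_matching_def edges_def)

lemma perfect_matching_star:
  assumes "perfect_matching n M" "x \<in> verts n"
  obtains h where "{e \<in> M. x \<in> e} = {h}"
proof -
  have "card {e \<in> M. x \<in> e} = 1" using assms by (simp add: perfect_matching_def)
  with that show ?thesis by (metis card_1_singletonE)
qed

lemma perfect_matching_edge_unique:
  assumes "perfect_matching n M" "g \<in> M" "h \<in> M" "x \<in> g" "x \<in> h"
  shows "g = h"
proof -
  have "x \<in> verts n" using perfect_matching_edge(3)[OF assms(1,2)] assms(4) by blast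
  then obtain a where a: "{e \<in> M. x \<in> e} = {a}" by (rule perfect_matching_star[OF assms(1)])
  have "g \<in> {e \<in> M. x \<in> e}" "h \<in> {e \<in> M. x \<in> e}" using assms(2-5) by simp_all
  then show ?thesis unfolding a by simp
qed

definition matching_closure :: "nat set set \<Rightarrow> nat set \<Rightarrow> nat set" where
  "matching_closure M X = (\<Union>x\<in>X. \<Union>{h \<in> M. x \<in> h})"

lemma matching_closure_bounds:
  assumes pm: "perfect_matching n M" and "X \<subseteq> verts n" "finite X"
  shows "X \<subseteq> matching_closure M X" "matching_closure M X \<subseteq> verts n"
    "card (matching_closure M X) \<le> 2 * card X"
proof -
  have star: "x \<in> \<Union>{h \<in> M. x \<in> h} \<and> card (\<Union>{h \<in> M. x \<in> h}) = 2" if "x \<in> X" for x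
  proof -
    have "x \<in> verts n" using assms(2) that by blast
    then obtain h where h: "{e \<in> M. x \<in> e} = {h}" by (rule perfect_matching_star[OF pm])
    then have "h \<in> M" "x \<in> h" "\<Union>{h \<in> M. x \<in> h} = h" by auto
    then show ?thesis using perfect_matching_edge(2)[OF pm] by simp
  qed
  show "X \<subseteq> matching_closure M X"
    unfolding matching_closure_def using star by blast
  show "matching_closure M X \<subseteq> verts n"
    using perfect_matching_edge(3)[OF pm] by (auto simp: matching_closure_def)
  have "card (matching_closure M X) \<le> (\<Sum>x\<in>X. card (\<Union>{h \<in> M. x \<in> h}))"
    unfolding matching_closure_def using assms(3) by (rule card_UN_le)
  also have "\<dots> = (\<Sum>x\<in>X. 2)" using star by (intro sum.cong) simp_all
  finally show "card (matching_closure M X) \<le> 2 * card X" by simp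
qed

lemma perfect_matching_subset_eq:
  assumes "perfect_matching n M1" "perfect_matching n M2" "M1 \<subseteq> M2"
  shows "M1 = M2"
proof
  show "M2 \<subseteq> M1"
  proof
    fix h assume h: "h \<in> M2"
    then obtain x y where "h = {x, y}" using perfect_matching_edge(2)[OF assms(2)] by (meson card_2_iff)
    then have x: "x \<in> h" "x \<in> verts n" using perfect_matching_edge(3)[OF assms(2) h] by auto
    obtain g where "{e \<in> M1. x \<in> e} = {g}" using perfect_matching_star[OF assms(1) x(2)] .
    then have "g \<in> M1" "x \<in> g" by auto
    then show "h \<in> M1"
      using perfect_matching_edge_unique[OF assms(2) _ h] assms(3) x by blast
  qed
qed (rule assms(3))

lemma xsum_chi_delta_singleton:
  assumes "perfect_matching n M" "v \<in> verts n"
  shows "xsum (chi M) (delta n {v}) = 1"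
proof -
  have "finite (delta n {v})" by (simp add: delta_def finite_edges)
  then have "xsum (chi M) (delta n {v}) = card (delta n {v} \<inter> M)"
    by (simp add: xsum_def chi_def sum.inter_restrict[symmetric])
  also have "delta n {v} \<inter> M = {e \<in> M. v \<in> e}"
    using assms(1) by (auto simp: delta_singleton perfect_matching_def)
  finally show ?thesis using assms by (simp add: perfect_matching_def)
qed

lemma in_ker_chi_diff:
  assumes "perfect_matching n M1" "perfect_matching n M2"
  shows "in_ker n (\<lambda>e. chi M1 e - chi M2 e)"
  unfolding in_ker_def is_vec_def
proof (intro conjI allI impI ballI)
  fix e assume "e \<notin> edges n"
  then show "chi M1 e - chi M2 e = 0"
    using assms by (auto simp: chi_def perfect_matching_def)
next
  fix v assume "v \<in> verts n"
  then show "xsum (\<lambda>e. chi M1 e - chi M2 e) (delta n {v}) = 0"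
    using xsum_chi_delta_singleton[OF assms(1)] xsum_chi_delta_singleton[OF assms(2)]
    by (simp add: xsum_def sum_subtractf)
qed

lemma sum_edges_supported:
  assumes "M \<subseteq> edges n" "\<And>e. y e \<noteq> 0 \<Longrightarrow> e \<in> M"
  shows "sum y {g \<in> edges n. P g} = sum y {g \<in> M. P g}"
proof (rule sum.mono_neutral_right)
  show "finite {g \<in> edges n. P g}" using finite_edges by simp
  show "{g \<in> M. P g} \<subseteq> {g \<in> edges n. P g}" using assms(1) by auto
  show "\<forall>g\<in>{g \<in> edges n. P g} - {g \<in> M. P g}. y g = 0" using assms(2) by auto
qed

lemma nonzero_of_supp_B_subset:
  assumes "is_vec n y" "supp_B n y \<subseteq> supp_B n g" "y e \<noteq> 0"
  shows "g e \<noteq> 0"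
proof -
  have "e \<in> edges n" using assms(1,3) by (auto simp: is_vec_def)
  then have "Inr e \<in> supp_B n y" using assms(3) by (simp add: supp_B_def ineq_rows_def)
  then show ?thesis using assms(2) by (auto simp: supp_B_def)
qed

lemma supp_B_scale:
  assumes "a \<noteq> 0"
  shows "supp_B n (\<lambda>e. a * g e) = supp_B n g"
proof -
  have "row_val n (\<lambda>e. a * g e) r = a * row_val n g r" for r
    by (cases r) (simp_all add: xsum_def sum_distrib_left)
  then show ?thesis using assms by (simp add: supp_B_def)
qed

lemma eq_scaled_chi_diff:
  assumes "e1 \<in> M1 - M2" "f1 \<in> M2 - M1"
    and supp: "\<And>e. y e \<noteq> 0 \<Longrightarrow> e \<in> (M1 - M2) \<union> (M2 - M1)"
    and sums: "\<And>e f. e \<in> M1 - M2 \<Longrightarrow> f \<in> M2 - M1 \<Longrightarrow> y e + y f = 0"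
  shows "y = (\<lambda>e. y e1 * (chi M1 e - chi M2 e))"
proof
  fix e
  consider "e \<in> M1 - M2" | "e \<in> M2 - M1" | "e \<notin> (M1 - M2) \<union> (M2 - M1)" by blast
  then show "y e = y e1 * (chi M1 e - chi M2 e)"
  proof cases
    case 1
    then show ?thesis using sums[OF 1 assms(2)] sums[OF assms(1,2)] by (simp add: chi_def)
  next
    case 2
    then show ?thesis using sums[OF assms(1) 2] by (simp add: chi_def)
  next
    case 3
    then show ?thesis using supp by (auto simp: chi_def)
  qed
qed

lemma perfect_matching_edge_within:
  assumes pm: "perfect_matching n M" and "g \<in> M" "e \<in> M" "f \<notin> M" "card f = 2"
    and w: "w \<notin> matching_closure M f" and "g \<subseteq> e \<union> f \<union> {w}"
  shows "g = e"
proof (rule ccontr)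
  assume "g \<noteq> e"
  then have "g \<inter> e = {}" using perfect_matching_edge_unique[OF pm \<open>g \<in> M\<close> \<open>e \<in> M\<close>] by blast
  then have gfw: "g \<subseteq> f \<union> {w}" using assms(7) by blast
  obtain a b where ab: "g = {a, b}" "a \<noteq> b"
    using perfect_matching_edge(2)[OF pm \<open>g \<in> M\<close>] by (meson card_2_iff)
  show False
  proof (cases "w \<in> g")
    case True
    then obtain x where "x \<in> g" "x \<noteq> w" using ab by blast
    then have "x \<in> f" using gfw by blast
    then show False using w \<open>x \<in> g\<close> \<open>g \<in> M\<close> True by (auto simp: matching_closure_def)
  next
    case False
    then have "g \<subseteq> f" using gfw by blast
    moreover have "finite f" using assms(5) by (metis card.infinite zero_neq_numeral)
    ultimately have "g = f" using card_subset_eq[of f g] assms(5) ab by simp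
    then show False using assms(2,4) by simp
  qed
qed

lemma matching_edges_within:
  assumes pm1: "perfect_matching n M1" and pm2: "perfect_matching n M2"
    and e0: "e0 \<in> M1 - M2" and f0: "f0 \<in> M2 - M1"
    and w: "w \<notin> matching_closure M1 f0 \<union> matching_closure M2 e0"
  shows "{g \<in> M1 \<union> M2. g \<subseteq> e0 \<union> f0 \<union> {w}} = {e0, f0}"
proof
  show "{e0, f0} \<subseteq> {g \<in> M1 \<union> M2. g \<subseteq> e0 \<union> f0 \<union> {w}}" using e0 f0 by auto
  have ce: "card e0 = 2" and cf: "card f0 = 2"
    using perfect_matching_edge(2)[OF pm1] perfect_matching_edge(2)[OF pm2] e0 f0 by auto
  show "{g \<in> M1 \<union> M2. g \<subseteq> e0 \<union> f0 \<union> {w}} \<subseteq> {e0, f0}"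
  proof
    fix g assume "g \<in> {g \<in> M1 \<union> M2. g \<subseteq> e0 \<union> f0 \<union> {w}}"
    then consider "g \<in> M1" "g \<subseteq> e0 \<union> f0 \<union> {w}" | "g \<in> M2" "g \<subseteq> f0 \<union> e0 \<union> {w}"
      by auto
    then show "g \<in> {e0, f0}"
    proof cases
      case 1
      have "g = e0" using perfect_matching_edge_within[OF pm1 1(1) _ _ cf _ 1(2)] e0 f0 w by blast
      then show ?thesis by simp
    next
      case 2
      have "g = f0" using perfect_matching_edge_within[OF pm2 2(1) _ _ ce _ 2(2)] e0 f0 w by blast
      then show ?thesis by simp
    qed
  qed
qed

lemma exists_odd_set_spanning_two_edges:
  assumes "n \<ge> 10" and pm1: "perfect_matching n M1" and pm2: "perfect_matching n M2"
    and e0: "e0 \<in> M1 - M2" and f0: "f0 \<in> M2 - M1" and "e0 \<inter> f0 = {}"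
  obtains S where "Inl S \<in> ineq_rows n" "{g \<in> M1 \<union> M2. g \<subseteq> S} = {e0, f0}"
proof -
  have ce: "card e0 = 2" "e0 \<subseteq> verts n" and cf: "card f0 = 2" "f0 \<subseteq> verts n"
    using perfect_matching_edge[OF pm1] perfect_matching_edge[OF pm2] e0 f0 by auto
  then have fin: "finite e0" "finite f0" by (auto intro: card_ge_0_finite)
  define B where "B = matching_closure M1 f0 \<union> matching_closure M2 e0"
  have "card B < card (verts n)" "B \<subseteq> verts n" "e0 \<union> f0 \<subseteq> B"
    using matching_closure_bounds[OF pm1 cf(2) fin(2)] matching_closure_bounds[OF pm2 ce(2) fin(1)]
      card_Un_le[of "matching_closure M1 f0" "matching_closure M2 e0"] ce(1) cf(1) assms(1)
    by (auto simp: B_def verts_def)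
  then obtain w where w: "w \<in> verts n" "w \<notin> B"
    by (metis less_irrefl subsetI subset_antisym)
  define S where "S = e0 \<union> f0 \<union> {w}"
  have "w \<notin> e0 \<union> f0" using \<open>e0 \<union> f0 \<subseteq> B\<close> w(2) by blast
  then have "card S = 5"
    using \<open>e0 \<inter> f0 = {}\<close> ce cf fin by (simp add: S_def card_Un_disjoint)
  moreover have "S \<subseteq> verts n" using ce cf w by (auto simp: S_def)
  moreover have "card (verts n) \<noteq> 5" using assms(1) by (simp add: verts_def)
  ultimately have "Inl S \<in> ineq_rows n" by (auto simp: ineq_rows_def)
  moreover have "{g \<in> M1 \<union> M2. g \<subseteq> S} = {e0, f0}"
    unfolding S_def using matching_edges_within[OF pm1 pm2 e0 f0] w(2) by (simp add: B_def)
  ultimately show ?thesis using that by blast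
qed

lemma xsum_delta_of_in_ker:
  assumes "in_ker n z" "S \<subseteq> verts n"
  shows "xsum z (delta n S) = -2 * sum z {g \<in> edges n. g \<subseteq> S}"
proof -
  have "finite S" using assms(2) by (simp add: verts_def finite_subset)
  moreover have "(\<Sum>v\<in>S. xsum z (delta n {v})) = 0"
    using assms by (intro sum.neutral) (auto simp: in_ker_def)
  ultimately show ?thesis using sum_xsum_delta_singletons[of S z n] by simp
qed

lemma disjoint_of_sum_nonzero:
  assumes pm1: "perfect_matching n M1" and pm2: "perfect_matching n M2" and "in_ker n y"
    and supp: "\<And>e. y e \<noteq> 0 \<Longrightarrow> e \<in> M1 \<union> M2"
    and "e0 \<in> M1" "f0 \<in> M2" "e0 \<noteq> f0" "y e0 + y f0 \<noteq> 0"
  shows "e0 \<inter> f0 = {}"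
proof (rule ccontr)
  assume "e0 \<inter> f0 \<noteq> {}"
  then obtain x where x: "x \<in> e0" "x \<in> f0" by blast
  have "{g \<in> M1 \<union> M2. x \<in> g} = {e0, f0}"
    using x assms(5,6) perfect_matching_edge_unique[OF pm1 _ _ _ x(1)]
      perfect_matching_edge_unique[OF pm2 _ _ _ x(2)] by blast
  moreover have "M1 \<union> M2 \<subseteq> edges n" using pm1 pm2 by (simp add: perfect_matching_def)
  ultimately have "xsum y (delta n {x}) = y e0 + y f0"
    using sum_edges_supported[where P = "\<lambda>g. x \<in> g", OF _ supp] assms(7)
    by (simp add: xsum_def delta_singleton)
  moreover have "x \<in> verts n" using perfect_matching_edge(3)[OF pm1] assms(5) x by blast
  ultimately show False using assms(3,8) by (simp add: in_ker_def)
qed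

lemma supp_B_not_psubset_chi_diff:
  assumes "n \<ge> 10" and pm1: "perfect_matching n M1" and pm2: "perfect_matching n M2"
    and "M1 \<noteq> M2" and ker: "in_ker n y" and "y \<noteq> (\<lambda>_. 0)"
  shows "\<not> supp_B n y \<subset> supp_B n (\<lambda>e. chi M1 e - chi M2 e)"
proof
  define c where "c = (\<lambda>e. chi M1 e - chi M2 e)"
  assume "supp_B n y \<subset> supp_B n (\<lambda>e. chi M1 e - chi M2 e)"
  then have ss: "supp_B n y \<subset> supp_B n c" by (simp add: c_def)
  have M12: "M1 \<union> M2 \<subseteq> edges n" using pm1 pm2 by (simp add: perfect_matching_def)
  have csupp: "e \<in> (M1 - M2) \<union> (M2 - M1)" if "c e \<noteq> 0" for e
    using that by (auto simp: c_def chi_def split: if_splits)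
  have ysupp: "e \<in> (M1 - M2) \<union> (M2 - M1)" if "y e \<noteq> 0" for e
    using csupp nonzero_of_supp_B_subset[of n y c e] ker ss that by (simp add: in_ker_def)
  have y12: "y e \<noteq> 0 \<Longrightarrow> e \<in> M1 \<union> M2" and c12: "c e \<noteq> 0 \<Longrightarrow> e \<in> M1 \<union> M2" for e
    using ysupp csupp by blast+
  have "\<exists>e0\<in>M1 - M2. \<exists>f0\<in>M2 - M1. y e0 + y f0 \<noteq> 0"
  proof (rule ccontr)
    assume "\<not> (\<exists>e0\<in>M1 - M2. \<exists>f0\<in>M2 - M1. y e0 + y f0 \<noteq> 0)"
    then have sums: "y e + y f = 0" if "e \<in> M1 - M2" "f \<in> M2 - M1" for e f
      using that by blast
    obtain e1 f1 where e1: "e1 \<in> M1 - M2" and f1: "f1 \<in> M2 - M1"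
      using perfect_matching_subset_eq pm1 pm2 \<open>M1 \<noteq> M2\<close> by blast
    have "y = (\<lambda>e. y e1 * c e)"
      unfolding c_def using e1 f1 ysupp sums by (rule eq_scaled_chi_diff)
    moreover have "y e1 \<noteq> 0" using \<open>y \<noteq> (\<lambda>_. 0)\<close> calculation by auto
    ultimately have "supp_B n y = supp_B n c" using supp_B_scale by metis
    then show False using ss by simp
  qed
  then obtain e0 f0 where e0: "e0 \<in> M1 - M2" and f0: "f0 \<in> M2 - M1" and yef: "y e0 + y f0 \<noteq> 0"
    by blast
  have "e0 \<noteq> f0" using e0 f0 by blast
  then have "e0 \<inter> f0 = {}" using disjoint_of_sum_nonzero[OF pm1 pm2 ker y12] e0 f0 yef by blast
  then obtain S where row: "Inl S \<in> ineq_rows n" and inner: "{g \<in> M1 \<union> M2. g \<subseteq> S} = {e0, f0}"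
    using exists_odd_set_spanning_two_edges[OF assms(1) pm1 pm2 e0 f0] by blast
  have "S \<subseteq> verts n" using row by (auto simp: ineq_rows_def)
  have cut_eq: "xsum z (delta n S) = -2 * (z e0 + z f0)"
    if "in_ker n z" "\<And>e. z e \<noteq> 0 \<Longrightarrow> e \<in> M1 \<union> M2" for z
    using xsum_delta_of_in_ker[OF that(1) \<open>S \<subseteq> verts n\<close>] \<open>e0 \<noteq> f0\<close> inner
      sum_edges_supported[where y = z and P = "\<lambda>g. g \<subseteq> S", OF M12 that(2)] by simp
  have "Inl S \<in> supp_B n y" using row yef cut_eq[OF ker y12] by (simp add: supp_B_def)
  moreover have "in_ker n c" unfolding c_def using pm1 pm2 by (rule in_ker_chi_diff)
  then have "Inl S \<notin> supp_B n c"
    using cut_eq[of c] c12 e0 f0 by (simp add: supp_B_def c_def chi_def)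
  ultimately show False using ss by blast
qed

theorem lemma5:
  fixes n :: nat and M1 M2 :: "nat set set"
  assumes "even n" and "n \<ge> 10"
    and "perfect_matching n M1" and "perfect_matching n M2" and "M1 \<noteq> M2"
  shows "is_circuit n (\<lambda>e. chi M1 e - chi M2 e)"
proof -
  obtain e where "e \<in> M1 - M2"
    using perfect_matching_subset_eq assms(3-5) by blast
  then have "(\<lambda>e. chi M1 e - chi M2 e) \<noteq> (\<lambda>_. 0)"
    by (auto simp: chi_def fun_eq_iff)
  then show ?thesis
    using in_ker_chi_diff[OF assms(3,4)] supp_B_not_psubset_chi_diff[OF assms(2-5)]
    by (auto simp: is_circuit_def)
qed

end
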